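(* In the setting below, for any $\vec w=(w_1,\ldots,w_n)$ with each $w_i\in W_M^Q$, \[ \theta^M(\vec w)-\theta^H(\vec w)=\frac{1}{2(r-s)}\big(\mathrm{expdim}_G(\vec w)-\mathrm{expdim}_M(\vec w)\big). \]
   Context: Weight space with orthonormal basis $\epsilon_1,\ldots,\epsilon_r$, dual basis $\epsilon_i^*$. $G=\mathrm{Sp}(2r)$ with positive roots $\epsilon_i-\epsilon_j$ ($i<j$), $\epsilon_i+\epsilon_j$ ($i\le j$), simple roots $\alpha_i=\epsilon_i-\epsilon_{i+1}$, $\alpha_r=2\epsilon_r$. Fix $1\le k\le s<r$. $M\cong\mathrm{Sp}(2s)\times\mathrm{Sp}(2(r-s))$ is the centralizer of $\tau=\mathrm{diag}(-1,\ldots,-1,1,\ldots,1,-1,\ldots,-1)$ ($2(r-s)$ ones) with positive roots $R^+_M$ the positive roots of $G$ trivial on $\tau$. $H=\mathrm{SO}(2s+1)\times\mathrm{Sp}(2(r-s))$ with positive roots $\epsilon_i\pm\epsilon_j$ ($1\le i<j\le s$), $\epsilon_i$ ($1\le i\le s$) together with the second-factor roots of $M$. $P$ is the maximal parabolic of $G$ omitting $\alpha_k$ ($G/P\cong\mathrm{IG}(k,2r)$), $Q=M\cap P$ ($M/Q\cong\mathrm{IG}(k,2s)$), $Q^H$ the corresponding parabolic of $H$; $x_Q=\sum_{i\le k}\epsilon_i^*$; $W_M^Q$ minimal coset representatives (same for $M$ and $H$, contained in $W^P$). $\chi^M_w=\sum_{\beta\in(R^+_M\setminus R^+_L)\cap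 w^{-1}R^+_M}\beta$ and $\chi^H_w$ likewise with $R^+_H$ and the Levi of $Q^H$. $\theta^M(\vec w)=(\chi^M_1-\sum_i\chi^M_{w_i})(x_Q)$, $\theta^H(\vec w)=(\chi^H_1-\sum_i\chi^H_{w_i})(x_Q)$ ($1$ the identity element). $\mathrm{expdim}_G(\vec w)=\dim(G/P)-\sum_i\mathrm{codim}(C_{w_i})$ and $\mathrm{expdim}_M(\vec w)=\dim(M/Q)-\sum_i\mathrm{codim}(C^M_{w_i})$, where $C_w\subseteq G/P$ and $C^M_w\subseteq M/Q$ are the Schubert cells indexed by $w$. *)

theory Defs
  imports Complex_Main "HOL-Library.Function_Algebras"
begin

text \<open>Weights of Sp(2r): integer vectors indexed by 1..r, as functions nat => int
  (coordinates w.r.t. the orthonormal basis eps_1,...,eps_r).\<close>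

type_synonym weight = "nat \<Rightarrow> int"

definition eps :: "nat \<Rightarrow> weight" where
  "eps i = (\<lambda>j. if j = i then 1 else 0)"

definition xQ :: "nat \<Rightarrow> weight \<Rightarrow> int" where
  "xQ k \<beta> = (\<Sum>i\<in>{1..k}. \<beta> i)"

definition posroots_G :: "nat \<Rightarrow> weight set" where
  "posroots_G r =
     {eps i - eps j | i j. 1 \<le> i \<and> i < j \<and> j \<le> r} \<union>
     {eps i + eps j | i j. 1 \<le> i \<and> i \<le> j \<and> j \<le> r}"

text \<open>Value of the character e^beta at tau = diag(-1,..,-1,1,..,1,-1,..,-1):
  tau acts on eps_i by -1 for i <= s and by 1 for s < i <= r.\<close>
definition char_at_tau :: "nat \<Rightarrow> weight \<Rightarrow> int" where
  "char_at_tau s \<beta> = (\<Prod>i\<in>{1..s}. (-1::int) ^ nat \<bar>\<beta> i\<bar>)"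

definition posroots_M :: "nat \<Rightarrow> nat \<Rightarrow> weight set" where
  "posroots_M r s = {\<beta> \<in> posroots_G r. char_at_tau s \<beta> = 1}"

text \<open>Positive roots of H = SO(2s+1) x Sp(2(r-s)).\<close>
definition posroots_H :: "nat \<Rightarrow> nat \<Rightarrow> weight set" where
  "posroots_H r s =
     {eps i - eps j | i j. 1 \<le> i \<and> i < j \<and> j \<le> s} \<union>
     {eps i + eps j | i j. 1 \<le> i \<and> i < j \<and> j \<le> s} \<union>
     {eps i | i. 1 \<le> i \<and> i \<le> s} \<union>
     {\<beta> \<in> posroots_M r s. \<forall>i\<in>{1..s}. \<beta> i = 0}"

text \<open>Positive roots of the Levi of the parabolic determined by x_Q
  (the maximal parabolic omitting alpha_k, resp. its intersection with M, resp. Q^H).\<close>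
definition levi :: "weight set \<Rightarrow> nat \<Rightarrow> weight set" where
  "levi R k = {\<beta> \<in> R. xQ k \<beta> = 0}"

text \<open>Weyl group of Sp(2r): signed permutations w of {1..r}, encoded as
  w i = +-sigma(i) meaning w(eps_i) = sgn(w i) eps_{|w i|}; identity outside {1..r}.\<close>
definition weyl :: "nat \<Rightarrow> (nat \<Rightarrow> int) set" where
  "weyl r = {w. bij_betw (\<lambda>i. nat \<bar>w i\<bar>) {1..r} {1..r} \<and>
                (\<forall>i. i \<notin> {1..r} \<longrightarrow> w i = int i)}"

definition weyl_id :: "nat \<Rightarrow> int" where
  "weyl_id = (\<lambda>i. int i)"

definition act :: "nat \<Rightarrow> (nat \<Rightarrow> int) \<Rightarrow> weight \<Rightarrow> weight" where
  "act r w v = (\<lambda>j. \<Sum>i\<in>{1..r}. if nat \<bar>w i\<bar> = j then sgn (w i) * v i else 0)"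

text \<open>Weyl group of M = Sp(2s) x Sp(2(r-s)) (= Weyl group of H).\<close>
definition weyl_M :: "nat \<Rightarrow> nat \<Rightarrow> (nat \<Rightarrow> int) set" where
  "weyl_M r s = {w \<in> weyl r. \<forall>i\<in>{1..r}. (nat \<bar>w i\<bar> \<le> s \<longleftrightarrow> i \<le> s)}"

definition WMQ :: "nat \<Rightarrow> nat \<Rightarrow> nat \<Rightarrow> (nat \<Rightarrow> int) set" where
  "WMQ r s k = {w \<in> weyl_M r s.
      \<forall>\<beta> \<in> levi (posroots_M r s) k. act r w \<beta> \<in> posroots_M r s}"

definition chi :: "weight set \<Rightarrow> nat \<Rightarrow> nat \<Rightarrow> (nat \<Rightarrow> int) \<Rightarrow> weight" where
  "chi R r k w = (\<Sum>\<beta> \<in> (R - levi R k) \<inter> {\<beta>. act r w \<beta> \<in> R}. \<beta>)"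

definition theta :: "weight set \<Rightarrow> nat \<Rightarrow> nat \<Rightarrow> (nat \<Rightarrow> int) list \<Rightarrow> int" where
  "theta R r k ws = xQ k (chi R r k weyl_id - sum_list (map (chi R r k) ws))"

definition wlength :: "weight set \<Rightarrow> nat \<Rightarrow> (nat \<Rightarrow> int) \<Rightarrow> nat" where
  "wlength R r w = card {\<beta> \<in> R. - act r w \<beta> \<in> R}"

definition flagdim :: "weight set \<Rightarrow> nat \<Rightarrow> nat" where
  "flagdim R k = card (R - levi R k)"

text \<open>Codimension of the Schubert cell C_w = B w P / P (dim C_w = l(w)).\<close>
definition schubert_codim :: "weight set \<Rightarrow> nat \<Rightarrow> nat \<Rightarrow> (nat \<Rightarrow> int) \<Rightarrow> int" where
  "schubert_codim R r k w = int (flagdim R k) - int (wlength R r w)"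

definition expdim :: "weight set \<Rightarrow> nat \<Rightarrow> nat \<Rightarrow> (nat \<Rightarrow> int) list \<Rightarrow> int" where
  "expdim R r k ws = int (flagdim R k) - sum_list (map (schubert_codim R r k) ws)"

end

theory Submission imports Defs begin

(* The positive roots of M and H agree except on the first factor's diagonal: M has the long
  roots 2 eps_i and H the short roots eps_i (i <= s).  Since W_M preserves the first-factor part
  of the squared length, the shared roots contribute equally to chi^M_w and chi^H_w, so
  (chi^M_w - chi^H_w)(x_Q) counts the i <= k with w(eps_i) positive; for w in W_M^Q this is
  k - N(w), where N(w) is the number of i <= s with w(eps_i) negative.
  On the other side, R_G - R_M consists of the roots eps_i +- eps_j with i <= s < j; counting
  those off the Levi gives dim G/P - dim M/Q = 2 k (r - s), and counting those inverted by w gives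
  l_G(w) - l_M(w) = 2 N(w) (r - s).  Both sides are thus the same multiple of
  k - sum_i (k - N(w_i)). *)

section \<open>Weights supported on two coordinates\<close>

definition wt2 :: "int \<Rightarrow> nat \<Rightarrow> int \<Rightarrow> nat \<Rightarrow> weight" where
  "wt2 a p b q = (\<lambda>l. (if l = p then a else 0) + (if l = q then b else 0))"

lemma wt2_apply: "wt2 a p b q l = (if l = p then a else 0) + (if l = q then b else 0)"
  by (simp add: wt2_def)

lemma eps_diff_eq_wt2: "eps i - eps j = wt2 1 i (-1) j"
  and eps_add_eq_wt2: "eps i + eps j = wt2 1 i 1 j"
  and eps_eq_wt2: "eps i = wt2 1 i 0 i"
  by (auto simp: wt2_def eps_def fun_eq_iff)

lemma uminus_wt2: "- wt2 a p b q = wt2 (-a) p (-b) q"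
  by (auto simp: wt2_def fun_eq_iff)

lemma inj_on_wt2_diag: "inj_on (\<lambda>i. wt2 1 i c i) S" if "c \<noteq> -1"
proof (rule inj_onI)
  fix i j assume "wt2 1 i c i = wt2 1 j c j"
  then have "wt2 1 i c i i = wt2 1 j c j i" by simp
  then show "i = j" using that by (auto simp: wt2_apply split: if_splits)
qed

lemma xQ_wt2: "xQ k (wt2 a p b q) = (if p \<in> {1..k} then a else 0) + (if q \<in> {1..k} then b else 0)"
  unfolding xQ_def wt2_apply by (simp add: sum.distrib)

lemma char_at_tau_wt2:
  assumes "p \<noteq> q"
  shows "char_at_tau s (wt2 a p b q)
     = (if p \<in> {1..s} then (-1) ^ nat \<bar>a\<bar> else 1) * (if q \<in> {1..s} then (-1) ^ nat \<bar>b\<bar> else 1)"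
proof -
  have "\<And>l. (-1::int) ^ nat \<bar>wt2 a p b q l\<bar>
      = (if l = p then (-1) ^ nat \<bar>a\<bar> else 1) * (if l = q then (-1) ^ nat \<bar>b\<bar> else 1)"
    using assms by (auto simp: wt2_apply)
  then show ?thesis unfolding char_at_tau_def by (simp add: prod.distrib)
qed

lemma char_at_tau_wt2_diag:
  "char_at_tau s (wt2 a p b p) = (if p \<in> {1..s} then (-1) ^ nat \<bar>a + b\<bar> else 1)"
proof -
  have "\<And>l. (-1::int) ^ nat \<bar>wt2 a p b p l\<bar> = (if l = p then (-1) ^ nat \<bar>a + b\<bar> else 1)"
    by (auto simp: wt2_apply)
  then show ?thesis unfolding char_at_tau_def by simp
qed

lemma xQ_zero: "xQ k 0 = 0"
  and xQ_add: "xQ k (f + g) = xQ k f + xQ k g"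
  and xQ_diff: "xQ k (f - g) = xQ k f - xQ k g"
  unfolding xQ_def by (simp_all add: sum.distrib sum_subtractf)

lemma xQ_sum: "xQ k (sum F S) = (\<Sum>x\<in>S. xQ k (F x))"
  by (induction S rule: infinite_finite_induct) (simp_all add: xQ_add xQ_def[of k "\<lambda>_. 0"] del: plus_fun_apply)

lemma xQ_sum_list: "xQ k (sum_list (map F ws)) = sum_list (map (\<lambda>w. xQ k (F w)) ws)"
  by (induction ws) (simp_all only: list.map sum_list.Nil sum_list.Cons xQ_zero xQ_add)

section \<open>Signed permutations\<close>

lemma weyl_abs_mem: "w \<in> weyl r \<Longrightarrow> i \<in> {1..r} \<Longrightarrow> nat \<bar>w i\<bar> \<in> {1..r}"
  unfolding weyl_def bij_betw_def by auto

lemma weyl_inj_on_abs: "w \<in> weyl r \<Longrightarrow> inj_on (\<lambda>i. nat \<bar>w i\<bar>) {1..r}"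
  unfolding weyl_def bij_betw_def by auto

lemma weyl_sgn_cases:
  assumes "w \<in> weyl r" "i \<in> {1..r}"
  obtains "0 < w i" "sgn (w i) = 1" | "w i < 0" "sgn (w i) = -1"
  using weyl_abs_mem[OF assms] by (cases "0 < w i") (auto simp: sgn_if)

lemma weyl_M_weyl: "w \<in> weyl_M r s \<Longrightarrow> w \<in> weyl r"
  unfolding weyl_M_def by auto

lemma weyl_M_abs_le_iff: "w \<in> weyl_M r s \<Longrightarrow> i \<in> {1..r} \<Longrightarrow> nat \<bar>w i\<bar> \<le> s \<longleftrightarrow> i \<le> s"
  unfolding weyl_M_def by auto

lemma weyl_id_in_weyl_M: "weyl_id \<in> weyl_M r s"
  unfolding weyl_M_def weyl_def weyl_id_def by (auto simp: bij_betw_def inj_on_def image_iff)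

lemma weyl_M_bij_betw_first:
  assumes "w \<in> weyl_M r s" "s \<le> r"
  shows "bij_betw (\<lambda>i. nat \<bar>w i\<bar>) {1..s} {1..s}"
proof -
  have w: "w \<in> weyl r" using assms(1) by (rule weyl_M_weyl)
  have "(\<lambda>i. nat \<bar>w i\<bar>) ` {1..s} \<subseteq> {1..s}"
    using weyl_M_abs_le_iff[OF assms(1)] weyl_abs_mem[OF w] assms(2) by fastforce
  moreover have "inj_on (\<lambda>i. nat \<bar>w i\<bar>) {1..s}"
    using weyl_inj_on_abs[OF w] assms(2) by (auto intro: inj_on_subset)
  ultimately show ?thesis by (simp add: bij_betw_def endo_inj_surj)
qed

lemma act_wt2:
  assumes "w \<in> weyl r" "p \<in> {1..r}" "q \<in> {1..r}"
  shows "act r w (wt2 a p b q) = wt2 (sgn (w p) * a) (nat \<bar>w p\<bar>) (sgn (w q) * b) (nat \<bar>w q\<bar>)"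
proof
  fix j
  have "\<And>i. (if nat \<bar>w i\<bar> = j then sgn (w i) * wt2 a p b q i else 0)
     = (if i = p then (if nat \<bar>w p\<bar> = j then sgn (w p) * a else 0) else 0)
     + (if i = q then (if nat \<bar>w q\<bar> = j then sgn (w q) * b else 0) else 0)"
    by (auto simp: wt2_apply algebra_simps)
  then show "act r w (wt2 a p b q) j = wt2 (sgn (w p) * a) (nat \<bar>w p\<bar>) (sgn (w q) * b) (nat \<bar>w q\<bar>) j"
    unfolding act_def using assms(2,3) by (simp add: sum.distrib wt2_apply)
qed

lemma act_apply_abs:
  assumes "w \<in> weyl r" "i \<in> {1..r}"
  shows "act r w v (nat \<bar>w i\<bar>) = sgn (w i) * v i"
proof -
  have "act r w v (nat \<bar>w i\<bar>) = (\<Sum>i'\<in>{1..r}. if i' = i then sgn (w i) * v i else 0)"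
    unfolding act_def using weyl_inj_on_abs[OF assms(1)] assms(2)
    by (intro sum.cong) (auto dest: inj_onD)
  then show ?thesis using assms(2) by simp
qed

lemma weyl_M_sum_first_even:
  assumes "w \<in> weyl_M r s" "s \<le> r" "\<And>x. g (- x) = g x"
  shows "(\<Sum>l\<in>{1..s}. g (act r w v l)) = (\<Sum>l\<in>{1..s}. g (v l) :: 'a :: comm_monoid_add)"
proof -
  have w: "w \<in> weyl r" using assms(1) by (rule weyl_M_weyl)
  have "(\<Sum>l\<in>{1..s}. g (act r w v l)) = (\<Sum>i\<in>{1..s}. g (act r w v (nat \<bar>w i\<bar>)))"
    using sum.reindex_bij_betw[OF weyl_M_bij_betw_first[OF assms(1,2)], of "\<lambda>l. g (act r w v l)"]
    by simp
  also have "\<dots> = (\<Sum>i\<in>{1..s}. g (v i))"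
  proof (rule sum.cong)
    fix i assume "i \<in> {1..s}"
    then have i: "i \<in> {1..r}" using assms(2) by auto
    from weyl_sgn_cases[OF w i] have "g (sgn (w i) * v i) = g (v i)"
      by cases (simp_all add: assms(3))
    then show "g (act r w v (nat \<bar>w i\<bar>)) = g (v i)"
      by (simp only: act_apply_abs[OF w i])
  qed simp
  finally show ?thesis .
qed

lemma char_at_tau_eq_power_sum: "char_at_tau s v = (-1) ^ (\<Sum>l\<in>{1..s}. nat \<bar>v l\<bar>)"
  unfolding char_at_tau_def by (simp add: power_sum)

lemma char_at_tau_act: "w \<in> weyl_M r s \<Longrightarrow> s \<le> r \<Longrightarrow> char_at_tau s (act r w v) = char_at_tau s v"
  unfolding char_at_tau_eq_power_sum by (subst weyl_M_sum_first_even) auto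

lemma char_at_tau_uminus: "char_at_tau s (- v) = char_at_tau s v"
  unfolding char_at_tau_def by simp

section \<open>The root systems of G, M and H\<close>

lemma posroots_G_eq_wt2:
  "posroots_G r = {wt2 1 i c j | i j c. 1 \<le> i \<and> i \<le> j \<and> j \<le> r \<and> (c = 1 \<or> (c = -1 \<and> i < j))}"
  unfolding posroots_G_def eps_diff_eq_wt2 eps_add_eq_wt2 by fastforce

lemma posroots_GE:
  assumes "\<beta> \<in> posroots_G r"
  obtains i j c where "\<beta> = wt2 1 i c j" "1 \<le> i" "i \<le> j" "j \<le> r" "c = 1 \<or> (c = -1 \<and> i < j)"
  using assms unfolding posroots_G_eq_wt2 by blast

lemma wt2_in_posroots_G:
  "1 \<le> i \<Longrightarrow> i \<le> j \<Longrightarrow> j \<le> r \<Longrightarrow> c = 1 \<or> (c = -1 \<and> i < j) \<Longrightarrow> wt2 1 i c j \<in> posroots_G r"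
  unfolding posroots_G_eq_wt2 by blast

lemma posroots_G_ge_neg1: "\<beta> \<in> posroots_G r \<Longrightarrow> \<beta> l \<ge> -1"
  by (erule posroots_GE) (auto simp: wt2_apply)

lemma posroots_G_ex_pos: "\<beta> \<in> posroots_G r \<Longrightarrow> \<exists>l. \<beta> l > 0"
  by (erule posroots_GE) (auto simp: wt2_apply)

lemma wt2_in_posroots_G_iff:
  assumes "1 \<le> p" "p < q" "q \<le> r" "a = 1 \<or> a = -1" "b = 1 \<or> b = -1"
  shows "wt2 a p b q \<in> posroots_G r \<longleftrightarrow> a = 1"
proof
  assume "wt2 a p b q \<in> posroots_G r"
  then obtain i j c where e: "wt2 a p b q = wt2 1 i c j" "i \<le> j" "c = 1 \<or> (c = -1 \<and> i < j)"
    by (rule posroots_GE)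
  then have "wt2 a p b q p = wt2 1 i c j p" "wt2 a p b q q = wt2 1 i c j q" "wt2 a p b q i = wt2 1 i c j i"
    by auto
  then show "a = 1" using assms e(2,3) by (auto simp: wt2_apply split: if_splits)
next
  assume "a = 1"
  then show "wt2 a p b q \<in> posroots_G r" using assms wt2_in_posroots_G[of p q r b] by auto
qed

lemma posroots_M_subset_G: "posroots_M r s \<subseteq> posroots_G r"
  unfolding posroots_M_def by auto

lemma finite_posroots_G: "finite (posroots_G r)"
proof -
  have "posroots_G r \<subseteq> (\<lambda>(i, j, c). wt2 1 i c j) ` ({1..r} \<times> {1..r} \<times> {1, -1})"
    unfolding posroots_G_eq_wt2 by force
  then show ?thesis by (rule finite_subset) auto
qed

lemma finite_posroots_M: "finite (posroots_M r s)"
  using finite_posroots_G posroots_M_subset_G by (rule finite_subset[rotated])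

definition shared_roots :: "nat \<Rightarrow> nat \<Rightarrow> weight set" where
  "shared_roots r s =
     {eps i - eps j | i j. 1 \<le> i \<and> i < j \<and> j \<le> s} \<union>
     {eps i + eps j | i j. 1 \<le> i \<and> i < j \<and> j \<le> s} \<union>
     {\<beta> \<in> posroots_M r s. \<forall>i\<in>{1..s}. \<beta> i = 0}"

definition long_roots :: "nat \<Rightarrow> weight set" where
  "long_roots s = {eps i + eps i | i. 1 \<le> i \<and> i \<le> s}"

definition short_roots :: "nat \<Rightarrow> weight set" where
  "short_roots s = {eps i | i. 1 \<le> i \<and> i \<le> s}"

lemma long_roots_eq_wt2: "long_roots s = (\<lambda>i. wt2 1 i 1 i) ` {1..s}"
  unfolding long_roots_def eps_add_eq_wt2 by auto

lemma short_roots_eq_wt2: "short_roots s = (\<lambda>i. wt2 1 i 0 i) ` {1..s}"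
  unfolding short_roots_def eps_eq_wt2 by auto

lemma shared_rootsE:
  assumes "\<beta> \<in> shared_roots r s"
  obtains i j c where "\<beta> = wt2 1 i c j" "1 \<le> i" "i < j" "j \<le> s" "c = 1 \<or> c = -1"
    | "\<beta> \<in> posroots_M r s" "\<forall>i\<in>{1..s}. \<beta> i = 0"
  using assms unfolding shared_roots_def eps_diff_eq_wt2 eps_add_eq_wt2 by blast

lemma posroots_H_eq: "posroots_H r s = shared_roots r s \<union> short_roots s"
  unfolding posroots_H_def shared_roots_def short_roots_def by blast

lemma posroots_M_eq:
  assumes "s < r"
  shows "posroots_M r s = shared_roots r s \<union> long_roots s"
proof (intro equalityI subsetI)
  fix \<beta> assume \<beta>: "\<beta> \<in> posroots_M r s"
  then have char: "char_at_tau s \<beta> = 1" unfolding posroots_M_def by auto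
  obtain i j c where e: "\<beta> = wt2 1 i c j" "1 \<le> i" "i \<le> j" "j \<le> r" "c = 1 \<or> (c = -1 \<and> i < j)"
    using \<beta> posroots_M_subset_G by (blast elim: posroots_GE)
  consider "s < i" | "i \<le> s" "i = j" | "i \<le> s" "i < j" "j \<le> s" | "i \<le> s" "s < j"
    using e(3) by linarith
  then show "\<beta> \<in> shared_roots r s \<union> long_roots s"
  proof cases
    case 1
    then have "\<forall>l\<in>{1..s}. \<beta> l = 0" using e by (auto simp: wt2_apply)
    then show ?thesis using \<beta> unfolding shared_roots_def by blast
  next
    case 2
    then show ?thesis using e unfolding long_roots_eq_wt2 by auto
  next
    case 3
    then show ?thesis unfolding shared_roots_def eps_diff_eq_wt2 eps_add_eq_wt2 using e by blast
  next
    case 4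
    then have "char_at_tau s \<beta> = -1" using e by (auto simp: char_at_tau_wt2)
    then show ?thesis using char by simp
  qed
next
  fix \<beta> assume "\<beta> \<in> shared_roots r s \<union> long_roots s"
  then consider (pair) i j c where "\<beta> = wt2 1 i c j" "1 \<le> i" "i < j" "j \<le> s" "c = 1 \<or> c = -1"
    | (second_factor) "\<beta> \<in> posroots_M r s" | (long) i where "\<beta> = wt2 1 i 1 i" "1 \<le> i" "i \<le> s"
    unfolding long_roots_eq_wt2 by (auto elim: shared_rootsE)
  then show "\<beta> \<in> posroots_M r s"
  proof cases
    case pair
    then show ?thesis using assms wt2_in_posroots_G[of i j r c]
      by (auto simp: posroots_M_def char_at_tau_wt2)
  next
    case second_factor
    then show ?thesis .
  next
    case long
    then show ?thesis using assms wt2_in_posroots_G[of i i r 1]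
      by (auto simp: posroots_M_def char_at_tau_wt2_diag)
  qed
qed

lemma finite_posroots_H:
  assumes "s < r"
  shows "finite (posroots_H r s)"
proof -
  have "finite (shared_roots r s)"
    using finite_posroots_M[of r s] unfolding posroots_M_eq[OF assms] by simp
  then show ?thesis by (simp add: posroots_H_eq short_roots_eq_wt2)
qed

section \<open>Comparing chi^M and chi^H\<close>

definition sqnorm_first :: "nat \<Rightarrow> weight \<Rightarrow> int" where
  "sqnorm_first s v = (\<Sum>l\<in>{1..s}. (v l)\<^sup>2)"

lemma sqnorm_first_act: "w \<in> weyl_M r s \<Longrightarrow> s \<le> r \<Longrightarrow> sqnorm_first s (act r w v) = sqnorm_first s v"
  unfolding sqnorm_first_def by (rule weyl_M_sum_first_even) auto

lemma sqnorm_first_wt2: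
  assumes "p \<noteq> q"
  shows "sqnorm_first s (wt2 a p b q) = (if p \<in> {1..s} then a\<^sup>2 else 0) + (if q \<in> {1..s} then b\<^sup>2 else 0)"
proof -
  have "\<And>l. (wt2 a p b q l)\<^sup>2 = (if l = p then a\<^sup>2 else 0) + (if l = q then b\<^sup>2 else 0)"
    using assms by (auto simp: wt2_apply)
  then show ?thesis unfolding sqnorm_first_def by (simp add: sum.distrib)
qed

lemma sqnorm_first_wt2_diag: "sqnorm_first s (wt2 a p b p) = (if p \<in> {1..s} then (a + b)\<^sup>2 else 0)"
proof -
  have "\<And>l. (wt2 a p b p l)\<^sup>2 = (if l = p then (a + b)\<^sup>2 else 0)"
    by (auto simp: wt2_apply)
  then show ?thesis unfolding sqnorm_first_def by simp
qed

lemma sqnorm_first_shared_roots: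
  assumes "\<beta> \<in> shared_roots r s"
  shows "sqnorm_first s \<beta> \<in> {0, 2}"
  using assms
proof (cases rule: shared_rootsE)
  case (1 i j c)
  then show ?thesis by (auto simp: sqnorm_first_wt2)
next
  case 2
  then show ?thesis by (simp add: sqnorm_first_def)
qed

lemma sqnorm_first_long_roots: "\<beta> \<in> long_roots s \<Longrightarrow> sqnorm_first s \<beta> = 4"
  unfolding long_roots_eq_wt2 by (auto simp: sqnorm_first_wt2_diag)

lemma sqnorm_first_short_roots: "\<beta> \<in> short_roots s \<Longrightarrow> sqnorm_first s \<beta> = 1"
  unfolding short_roots_eq_wt2 by (auto simp: sqnorm_first_wt2_diag)

lemma act_shared_roots_notin:
  assumes "w \<in> weyl_M r s" "s \<le> r" "\<beta> \<in> shared_roots r s"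
  shows "act r w \<beta> \<notin> long_roots s" "act r w \<beta> \<notin> short_roots s"
  using sqnorm_first_shared_roots[OF assms(3)] sqnorm_first_act[OF assms(1,2), of \<beta>]
    sqnorm_first_long_roots[of "act r w \<beta>" s] sqnorm_first_short_roots[of "act r w \<beta>" s]
  by auto

lemma shared_roots_disjoint: "shared_roots r s \<inter> long_roots s = {}" "shared_roots r s \<inter> short_roots s = {}"
  using sqnorm_first_shared_roots sqnorm_first_long_roots sqnorm_first_short_roots by fastforce+

lemma posroots_H_ex_pos:
  assumes "s < r" "\<beta> \<in> posroots_H r s"
  shows "\<exists>l. \<beta> l > 0"
proof -
  have "posroots_H r s \<subseteq> posroots_G r \<union> short_roots s"
    using posroots_M_eq[OF assms(1)] posroots_M_subset_G[of r s] posroots_H_eq[of r s] by blast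
  then show ?thesis
    using assms(2) posroots_G_ex_pos[of \<beta> r] by (auto simp: short_roots_eq_wt2 wt2_apply)
qed

lemma long_roots_kept_positive:
  assumes "w \<in> weyl_M r s" "s < r"
  shows "long_roots s \<inter> {\<beta>. act r w \<beta> \<in> posroots_M r s} = (\<lambda>i. wt2 1 i 1 i) ` {i\<in>{1..s}. 0 < w i}"
proof -
  have w: "w \<in> weyl r" using assms(1) by (rule weyl_M_weyl)
  have "act r w (wt2 1 i 1 i) \<in> posroots_M r s \<longleftrightarrow> 0 < w i" if "i \<in> {1..s}" for i
  proof -
    have i: "i \<in> {1..r}" using that assms(2) by auto
    have wi: "nat \<bar>w i\<bar> \<in> {1..s}"
      using weyl_abs_mem[OF w i] weyl_M_abs_le_iff[OF assms(1) i] that by auto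
    from weyl_sgn_cases[OF w i] show ?thesis
    proof cases
      case 1
      then have "act r w (wt2 1 i 1 i) \<in> long_roots s"
        using wi unfolding act_wt2[OF w i i] long_roots_eq_wt2 by auto
      then show ?thesis using 1 posroots_M_eq[OF assms(2)] by auto
    next
      case 2
      then have "act r w (wt2 1 i 1 i) (nat \<bar>w i\<bar>) = -2" by (simp add: act_wt2[OF w i i] wt2_apply)
      then have "act r w (wt2 1 i 1 i) \<notin> posroots_M r s"
        using posroots_M_subset_G posroots_G_ge_neg1[of "act r w (wt2 1 i 1 i)" r "nat \<bar>w i\<bar>"] by force
      then show ?thesis using 2 by simp
    qed
  qed
  then show ?thesis unfolding long_roots_eq_wt2 by auto
qed

lemma short_roots_kept_positive:
  assumes "w \<in> weyl_M r s" "s < r"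
  shows "short_roots s \<inter> {\<beta>. act r w \<beta> \<in> posroots_H r s} = (\<lambda>i. wt2 1 i 0 i) ` {i\<in>{1..s}. 0 < w i}"
proof -
  have w: "w \<in> weyl r" using assms(1) by (rule weyl_M_weyl)
  have "act r w (wt2 1 i 0 i) \<in> posroots_H r s \<longleftrightarrow> 0 < w i" if "i \<in> {1..s}" for i
  proof -
    have i: "i \<in> {1..r}" using that assms(2) by auto
    have wi: "nat \<bar>w i\<bar> \<in> {1..s}"
      using weyl_abs_mem[OF w i] weyl_M_abs_le_iff[OF assms(1) i] that by auto
    from weyl_sgn_cases[OF w i] show ?thesis
    proof cases
      case 1
      then have "act r w (wt2 1 i 0 i) \<in> short_roots s"
        using wi unfolding act_wt2[OF w i i] short_roots_eq_wt2 by auto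
      then show ?thesis using 1 posroots_H_eq by auto
    next
      case 2
      then have "\<not> act r w (wt2 1 i 0 i) l > 0" for l by (simp add: act_wt2[OF w i i] wt2_apply)
      then have "act r w (wt2 1 i 0 i) \<notin> posroots_H r s" using posroots_H_ex_pos[OF assms(2)] by blast
      then show ?thesis using 2 by simp
    qed
  qed
  then show ?thesis unfolding short_roots_eq_wt2 by auto
qed

lemma sum_xQ_wt2_diag:
  assumes "c \<noteq> -1" "finite S"
  shows "(\<Sum>\<beta>\<in>(\<lambda>i. wt2 1 i c i) ` S. xQ k \<beta>) = (1 + c) * int (card (S \<inter> {1..k}))"
proof -
  have "(\<Sum>\<beta>\<in>(\<lambda>i. wt2 1 i c i) ` S. xQ k \<beta>) = (\<Sum>i\<in>S. if i \<in> {1..k} then 1 + c else 0)"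
    by (subst sum.reindex[OF inj_on_wt2_diag[OF assms(1)]]) (auto simp: xQ_wt2 intro: sum.cong)
  also have "\<dots> = (1 + c) * int (card (S \<inter> {1..k}))"
    using sum.inter_restrict[OF assms(2), of "\<lambda>_. 1 + c" "{1..k}"] by (simp add: mult.commute)
  finally show ?thesis .
qed

lemma xQ_chi:
  assumes "finite R"
  shows "xQ k (chi R r k w) = (\<Sum>\<beta>\<in>R \<inter> {\<beta>. act r w \<beta> \<in> R}. xQ k \<beta>)"
proof -
  have "xQ k (chi R r k w) = (\<Sum>\<beta>\<in>(R - levi R k) \<inter> {\<beta>. act r w \<beta> \<in> R}. xQ k \<beta>)"
    unfolding chi_def xQ_sum by simp
  also have "\<dots> = (\<Sum>\<beta>\<in>R \<inter> {\<beta>. act r w \<beta> \<in> R}. xQ k \<beta>)"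
    by (rule sum.mono_neutral_left) (use assms in \<open>auto simp: levi_def\<close>)
  finally show ?thesis .
qed

lemma xQ_chi_M_minus_chi_H:
  assumes "w \<in> weyl_M r s" "s < r"
  shows "xQ k (chi (posroots_M r s) r k w) - xQ k (chi (posroots_H r s) r k w)
         = int (card ({i\<in>{1..s}. 0 < w i} \<inter> {1..k}))"
proof -
  let ?M = "posroots_M r s" and ?H = "posroots_H r s" and ?A = "shared_roots r s"
  let ?kept = "\<lambda>X Y. X \<inter> {\<beta>. act r w \<beta> \<in> Y}"
  let ?pos = "card ({i\<in>{1..s}. 0 < w i} \<inter> {1..k})"
  have sr: "s \<le> r" using assms(2) by simp
  have fin: "finite (?kept ?A ?A)" "finite (?kept (long_roots s) ?M)" "finite (?kept (short_roots s) ?H)"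
    using finite_posroots_M[of r s] posroots_M_eq[OF assms(2)] by (auto simp: long_roots_def short_roots_def)
  have "?kept ?M ?M = ?kept ?A ?A \<union> ?kept (long_roots s) ?M"
    using posroots_M_eq[OF assms(2)] act_shared_roots_notin[OF assms(1) sr] by auto
  then have "xQ k (chi ?M r k w) = (\<Sum>\<beta>\<in>?kept ?A ?A. xQ k \<beta>) + (\<Sum>\<beta>\<in>?kept (long_roots s) ?M. xQ k \<beta>)"
    unfolding xQ_chi[OF finite_posroots_M]
    by (simp only:) (rule sum.union_disjoint[OF fin(1,2)], use shared_roots_disjoint(1) in blast)
  also have "(\<Sum>\<beta>\<in>?kept (long_roots s) ?M. xQ k \<beta>) = 2 * int ?pos"
    unfolding long_roots_kept_positive[OF assms] by (simp add: sum_xQ_wt2_diag)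
  finally have M: "xQ k (chi ?M r k w) = (\<Sum>\<beta>\<in>?kept ?A ?A. xQ k \<beta>) + 2 * int ?pos" .
  have "?kept ?H ?H = ?kept ?A ?A \<union> ?kept (short_roots s) ?H"
    using posroots_H_eq[of r s] act_shared_roots_notin[OF assms(1) sr] by auto
  then have "xQ k (chi ?H r k w) = (\<Sum>\<beta>\<in>?kept ?A ?A. xQ k \<beta>) + (\<Sum>\<beta>\<in>?kept (short_roots s) ?H. xQ k \<beta>)"
    unfolding xQ_chi[OF finite_posroots_H[OF assms(2)]]
    by (simp only:) (rule sum.union_disjoint[OF fin(1,3)], use shared_roots_disjoint(2) in blast)
  also have "(\<Sum>\<beta>\<in>?kept (short_roots s) ?H. xQ k \<beta>) = int ?pos"
    unfolding short_roots_kept_positive[OF assms] by (simp add: sum_xQ_wt2_diag)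
  finally have H: "xQ k (chi ?H r k w) = (\<Sum>\<beta>\<in>?kept ?A ?A. xQ k \<beta>) + int ?pos" .
  show ?thesis unfolding M H by simp
qed

definition num_neg :: "nat \<Rightarrow> (nat \<Rightarrow> int) \<Rightarrow> nat" where
  "num_neg s w = card {i\<in>{1..s}. w i < 0}"

lemma num_neg_weyl_id: "num_neg s weyl_id = 0"
  unfolding num_neg_def weyl_id_def by simp

lemma WMQ_pos_beyond_k:
  assumes "w \<in> WMQ r s k" "s < r" "i \<in> {k<..s}"
  shows "0 < w i"
proof -
  have wM: "w \<in> weyl_M r s" using assms(1) unfolding WMQ_def by auto
  have long: "wt2 1 i 1 i \<in> long_roots s" unfolding long_roots_eq_wt2 using assms(3) by auto
  then have "wt2 1 i 1 i \<in> levi (posroots_M r s) k"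
    unfolding levi_def using posroots_M_eq[OF assms(2)] assms(3) by (auto simp: xQ_wt2)
  then have "act r w (wt2 1 i 1 i) \<in> posroots_M r s" using assms(1) unfolding WMQ_def by auto
  then have "wt2 1 i 1 i \<in> (\<lambda>i. wt2 1 i 1 i) ` {i\<in>{1..s}. 0 < w i}"
    using long_roots_kept_positive[OF wM assms(2)] long by auto
  then show ?thesis using inj_on_wt2_diag[of 1 UNIV] by (auto dest: inj_onD)
qed

lemma card_pos_upto_k:
  assumes "w \<in> weyl_M r s" "s \<le> r" "k \<le> s" "\<forall>i\<in>{k<..s}. 0 < w i"
  shows "card ({i\<in>{1..s}. 0 < w i} \<inter> {1..k}) + num_neg s w = k"
proof -
  let ?pos = "{i\<in>{1..s}. 0 < w i} \<inter> {1..k}" and ?neg = "{i\<in>{1..s}. w i < 0}"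
  have w: "w \<in> weyl r" using assms(1) by (rule weyl_M_weyl)
  have "?neg \<subseteq> {1..k}"
  proof
    fix i assume "i \<in> ?neg"
    then have i: "1 \<le> i" "i \<le> s" "w i < 0" by auto
    have "i \<le> k"
    proof (rule ccontr)
      assume "\<not> i \<le> k"
      then have "i \<in> {k<..s}" using i(2) by simp
      then show False using assms(4) i(3) by fastforce
    qed
    then show "i \<in> {1..k}" using i by simp
  qed
  moreover have "{1..k} \<subseteq> ?pos \<union> ?neg"
  proof
    fix i assume i: "i \<in> {1..k}"
    then have "w i \<noteq> 0" using weyl_abs_mem[OF w, of i] assms(2,3) by auto
    then show "i \<in> ?pos \<union> ?neg" using i assms(3) by auto
  qed
  ultimately have "{1..k} = ?pos \<union> ?neg" by auto
  moreover have "?pos \<inter> ?neg = {}" by auto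
  ultimately have "card {1..k} = card ?pos + card ?neg"
    by (metis card_Un_disjoint finite_Un finite_atLeastAtMost)
  then show ?thesis unfolding num_neg_def by simp
qed

lemma xQ_chi_M_minus_chi_H_num_neg:
  assumes "w \<in> weyl_M r s" "s < r" "k \<le> s" "\<forall>i\<in>{k<..s}. 0 < w i"
  shows "xQ k (chi (posroots_M r s) r k w) - xQ k (chi (posroots_H r s) r k w) = int k - int (num_neg s w)"
  using card_pos_upto_k[OF assms(1) _ assms(3,4)] assms(2)
  unfolding xQ_chi_M_minus_chi_H[OF assms(1,2)] by simp

lemma theta_M_minus_theta_H:
  assumes "k \<le> s" "s < r" "\<forall>w \<in> set ws. w \<in> WMQ r s k"
  shows "theta (posroots_M r s) r k ws - theta (posroots_H r s) r k ws
         = int k - (\<Sum>w\<leftarrow>ws. int k - int (num_neg s w))"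
proof -
  let ?d = "\<lambda>w. xQ k (chi (posroots_M r s) r k w) - xQ k (chi (posroots_H r s) r k w)"
  have "theta (posroots_M r s) r k ws - theta (posroots_H r s) r k ws = ?d weyl_id - (\<Sum>w\<leftarrow>ws. ?d w)"
    unfolding theta_def xQ_diff xQ_sum_list by (simp add: sum_list_subtractf)
  moreover have "?d weyl_id = int k"
  proof -
    have "\<forall>i\<in>{k<..s}. 0 < weyl_id i" by (simp add: weyl_id_def)
    then show ?thesis
      using xQ_chi_M_minus_chi_H_num_neg[OF weyl_id_in_weyl_M assms(2,1)] by (simp add: num_neg_weyl_id)
  qed
  moreover have "map ?d ws = map (\<lambda>w. int k - int (num_neg s w)) ws"
  proof (rule map_cong[OF refl])
    fix w assume "w \<in> set ws"
    then have "w \<in> WMQ r s k" using assms(3) by blast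
    then have "w \<in> weyl_M r s" "\<forall>i\<in>{k<..s}. 0 < w i"
      using WMQ_pos_beyond_k[OF _ assms(2)] by (auto simp: WMQ_def)
    then show "?d w = int k - int (num_neg s w)" by (rule xQ_chi_M_minus_chi_H_num_neg[OF _ assms(2,1)])
  qed
  ultimately show ?thesis by simp
qed

section \<open>Comparing G/P with M/Q\<close>

definition mixed_root :: "nat \<times> nat \<times> int \<Rightarrow> weight" where
  "mixed_root = (\<lambda>(i, j, c). wt2 1 i c j)"

lemma inj_on_mixed_root: "inj_on mixed_root ({1..s} \<times> {s<..r} \<times> {1, -1})"
proof (rule inj_onI)
  fix x y assume "x \<in> {1..s} \<times> {s<..r} \<times> {1, -1}" "y \<in> {1..s} \<times> {s<..r} \<times> {1, -1}"
    and eq: "mixed_root x = mixed_root y"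
  then obtain i j c i' j' c' where xy: "x = (i, j, c)" "y = (i', j', c')"
    and dom: "i \<in> {1..s}" "j \<in> {s<..r}" "c \<in> {1, -1}" "i' \<in> {1..s}" "j' \<in> {s<..r}" "c' \<in> {1, -1}"
    by auto
  from eq have "wt2 1 i c j i = wt2 1 i' c' j' i" "wt2 1 i c j j = wt2 1 i' c' j' j"
    unfolding xy mixed_root_def by simp_all
  then show "x = y" unfolding xy using dom by (auto simp: wt2_apply split: if_splits)
qed

lemma posroots_G_diff_M:
  assumes "s < r"
  shows "posroots_G r - posroots_M r s = mixed_root ` ({1..s} \<times> {s<..r} \<times> {1, -1})"
proof (intro equalityI subsetI)
  fix \<beta> assume \<beta>: "\<beta> \<in> posroots_G r - posroots_M r s"
  then have char: "char_at_tau s \<beta> \<noteq> 1" unfolding posroots_M_def by auto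
  obtain i j c where e: "\<beta> = wt2 1 i c j" "1 \<le> i" "i \<le> j" "j \<le> r" "c = 1 \<or> (c = -1 \<and> i < j)"
    using \<beta> by (auto elim: posroots_GE)
  have "i \<noteq> j" using char e by (auto simp: char_at_tau_wt2_diag split: if_splits)
  then have "i \<le> s \<and> s < j" using char e by (auto simp: char_at_tau_wt2 split: if_splits)
  then show "\<beta> \<in> mixed_root ` ({1..s} \<times> {s<..r} \<times> {1, -1})"
    unfolding mixed_root_def using e by (intro image_eqI[of _ _ "(i, j, c)"]) auto
next
  fix \<beta> assume "\<beta> \<in> mixed_root ` ({1..s} \<times> {s<..r} \<times> {1, -1})"
  then obtain i j c where e: "\<beta> = wt2 1 i c j" "i \<in> {1..s}" "j \<in> {s<..r}" "c = 1 \<or> c = -1"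
    unfolding mixed_root_def by auto
  then have "\<beta> \<in> posroots_G r" using wt2_in_posroots_G[of i j r c] by auto
  moreover have "char_at_tau s \<beta> = -1" using e by (auto simp: char_at_tau_wt2)
  ultimately show "\<beta> \<in> posroots_G r - posroots_M r s" unfolding posroots_M_def by auto
qed

lemma card_mixed_root_image:
  "I \<subseteq> {1..s} \<Longrightarrow> finite I \<Longrightarrow> card (mixed_root ` (I \<times> {s<..r} \<times> {1, -1})) = 2 * card I * (r - s)"
  by (subst card_image[OF inj_on_subset[OF inj_on_mixed_root]]) (auto simp: card_cartesian_product)

lemma flagdim_G_minus_M:
  assumes "s < r" "k \<le> s"
  shows "int (flagdim (posroots_G r) k) - int (flagdim (posroots_M r s) k) = 2 * int k * (int r - int s)"
proof -
  let ?G = "posroots_G r" and ?M = "posroots_M r s"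
  have xQ_mixed: "xQ k (mixed_root (i, j, c)) = (if i \<le> k then 1 else 0)"
    if "i \<in> {1..s}" "j \<in> {s<..r}" for i j c
    using that assms unfolding mixed_root_def by (auto simp: xQ_wt2)
  have split: "?G - levi ?G k = (?M - levi ?M k) \<union> ((?G - ?M) - levi ?G k)"
    using posroots_M_subset_G[of r s] unfolding levi_def by auto
  have image: "(?G - ?M) - levi ?G k = mixed_root ` ({1..k} \<times> {s<..r} \<times> {1, -1})"
  proof (intro equalityI subsetI)
    fix \<beta> assume \<beta>: "\<beta> \<in> (?G - ?M) - levi ?G k"
    then obtain i j c where "\<beta> = mixed_root (i, j, c)" "i \<in> {1..s}" "j \<in> {s<..r}" "c \<in> {1, -1}"
      unfolding posroots_G_diff_M[OF assms(1)] by blast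
    moreover from calculation have "i \<le> k" using \<beta> xQ_mixed[of i j c] by (auto simp: levi_def split: if_splits)
    ultimately show "\<beta> \<in> mixed_root ` ({1..k} \<times> {s<..r} \<times> {1, -1})" by auto
  next
    fix \<beta> assume "\<beta> \<in> mixed_root ` ({1..k} \<times> {s<..r} \<times> {1, -1})"
    then obtain i j c where "\<beta> = mixed_root (i, j, c)" "i \<in> {1..k}" "j \<in> {s<..r}" "c \<in> {1, -1}"
      by blast
    moreover from calculation have "i \<in> {1..s}" using assms(2) by auto
    ultimately show "\<beta> \<in> (?G - ?M) - levi ?G k"
      unfolding posroots_G_diff_M[OF assms(1)] levi_def using xQ_mixed[of i j c] by auto
  qed
  have "card (?G - levi ?G k) = card (?M - levi ?M k) + card ((?G - ?M) - levi ?G k)"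
    unfolding split by (rule card_Un_disjoint) (use finite_posroots_G finite_posroots_M in auto)
  also have "card ((?G - ?M) - levi ?G k) = 2 * k * (r - s)"
    unfolding image using card_mixed_root_image[of "{1..k}" s r] assms(2) by simp
  finally have "card (?G - levi ?G k) = card (?M - levi ?M k) + 2 * k * (r - s)" .
  then show ?thesis unfolding flagdim_def using assms by simp
qed

lemma mixed_root_inverted_iff:
  assumes "w \<in> weyl_M r s" "i \<in> {1..s}" "j \<in> {s<..r}" "c \<in> {1, -1}"
  shows "- act r w (mixed_root (i, j, c)) \<in> posroots_G r \<longleftrightarrow> w i < 0"
proof -
  have w: "w \<in> weyl r" using assms(1) by (rule weyl_M_weyl)
  have i: "i \<in> {1..r}" and j: "j \<in> {1..r}" using assms(2,3) by auto
  define p q where "p = nat \<bar>w i\<bar>" and "q = nat \<bar>w j\<bar>"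
  have "p \<in> {1..s}" "q \<in> {s<..r}"
    unfolding p_def q_def using weyl_abs_mem[OF w i] weyl_abs_mem[OF w j]
      weyl_M_abs_le_iff[OF assms(1) i] weyl_M_abs_le_iff[OF assms(1) j] assms(2,3) by auto
  then have pq: "1 \<le> p" "p < q" "q \<le> r" by auto
  have "- act r w (mixed_root (i, j, c)) = wt2 (- sgn (w i)) p (- (sgn (w j) * c)) q"
    unfolding mixed_root_def p_def q_def using act_wt2[OF w i j] by (simp add: uminus_wt2)
  moreover have "- (sgn (w j) * c) = 1 \<or> - (sgn (w j) * c) = -1"
    using weyl_sgn_cases[OF w j] assms(4) by cases auto
  moreover have "- sgn (w i) = 1 \<or> - sgn (w i) = -1"
    using weyl_sgn_cases[OF w i] by cases auto
  ultimately have "- act r w (mixed_root (i, j, c)) \<in> posroots_G r \<longleftrightarrow> - sgn (w i) = 1"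
    using wt2_in_posroots_G_iff[OF pq] by presburger
  also have "\<dots> \<longleftrightarrow> w i < 0"
    using weyl_sgn_cases[OF w i] by cases auto
  finally show ?thesis .
qed

lemma wlength_G_minus_M:
  assumes "w \<in> weyl_M r s" "s < r"
  shows "int (wlength (posroots_G r) r w) - int (wlength (posroots_M r s) r w)
         = 2 * int (num_neg s w) * (int r - int s)"
proof -
  let ?G = "posroots_G r" and ?M = "posroots_M r s"
  let ?neg = "{i\<in>{1..s}. w i < 0}"
  have "- act r w \<beta> \<in> ?M" if "\<beta> \<in> ?M" "- act r w \<beta> \<in> ?G" for \<beta>
    using that char_at_tau_act[OF assms(1), of \<beta>] char_at_tau_uminus[of s "act r w \<beta>"] assms(2)
    unfolding posroots_M_def by auto
  then have split: "{\<beta>\<in>?G. - act r w \<beta> \<in> ?G} = {\<beta>\<in>?M. - act r w \<beta> \<in> ?M} \<union> {\<beta>\<in>?G - ?M. - act r w \<beta> \<in> ?G}"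
    using posroots_M_subset_G[of r s] by auto
  have image: "{\<beta>\<in>?G - ?M. - act r w \<beta> \<in> ?G} = mixed_root ` (?neg \<times> {s<..r} \<times> {1, -1})"
    unfolding posroots_G_diff_M[OF assms(2)] using mixed_root_inverted_iff[OF assms(1)] by auto
  have "card {\<beta>\<in>?G. - act r w \<beta> \<in> ?G} = card {\<beta>\<in>?M. - act r w \<beta> \<in> ?M} + card {\<beta>\<in>?G - ?M. - act r w \<beta> \<in> ?G}"
    unfolding split by (rule card_Un_disjoint) (use finite_posroots_G finite_posroots_M in auto)
  also have "card {\<beta>\<in>?G - ?M. - act r w \<beta> \<in> ?G} = 2 * num_neg s w * (r - s)"
    unfolding image num_neg_def by (rule card_mixed_root_image) auto
  finally have "card {\<beta>\<in>?G. - act r w \<beta> \<in> ?G} = card {\<beta>\<in>?M. - act r w \<beta> \<in> ?M} + 2 * num_neg s w * (r - s)" .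
  then show ?thesis unfolding wlength_def using assms(2) by simp
qed

lemma expdim_diff:
  "expdim R r k ws - expdim R' r k ws
     = (int (flagdim R k) - int (flagdim R' k))
       - (\<Sum>w\<leftarrow>ws. (int (flagdim R k) - int (flagdim R' k)) - (int (wlength R r w) - int (wlength R' r w)))"
  unfolding expdim_def schubert_codim_def by (induction ws) (simp_all add: algebra_simps)

lemma expdim_G_minus_M:
  assumes "k \<le> s" "s < r" "\<forall>w \<in> set ws. w \<in> weyl_M r s"
  shows "expdim (posroots_G r) r k ws - expdim (posroots_M r s) r k ws
         = 2 * (int r - int s) * (int k - (\<Sum>w\<leftarrow>ws. int k - int (num_neg s w)))"
proof -
  let ?G = "posroots_G r" and ?M = "posroots_M r s"
  have map_eq: "map (\<lambda>w. (int (flagdim ?G k) - int (flagdim ?M k)) - (int (wlength ?G r w) - int (wlength ?M r w))) ws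
      = map (\<lambda>w. 2 * (int r - int s) * (int k - int (num_neg s w))) ws"
    using assms(3) wlength_G_minus_M[OF _ assms(2)] flagdim_G_minus_M[OF assms(2,1)]
    by (intro map_cong) (simp_all add: algebra_simps)
  have "(\<Sum>w\<leftarrow>ws. (int (flagdim ?G k) - int (flagdim ?M k)) - (int (wlength ?G r w) - int (wlength ?M r w)))
      = 2 * (int r - int s) * (\<Sum>w\<leftarrow>ws. int k - int (num_neg s w))"
    using arg_cong[where f = sum_list, OF map_eq] by (simp only: sum_list_const_mult)
  then show ?thesis
    unfolding expdim_diff by (simp add: flagdim_G_minus_M[OF assms(2,1)] algebra_simps)
qed

theorem mainTheorem10:
  fixes r s k :: nat and ws :: "(nat \<Rightarrow> int) list"
  assumes "1 \<le> k" and "k \<le> s" and "s < r"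
    and "\<forall>w \<in> set ws. w \<in> WMQ r s k"
  shows "real_of_int (theta (posroots_M r s) r k ws) - real_of_int (theta (posroots_H r s) r k ws)
         = real_of_int (expdim (posroots_G r) r k ws - expdim (posroots_M r s) r k ws)
           / (2 * (real r - real s))"
proof -
  have "expdim (posroots_G r) r k ws - expdim (posroots_M r s) r k ws
      = 2 * (int r - int s) * (int k - (\<Sum>w\<leftarrow>ws. int k - int (num_neg s w)))"
    by (rule expdim_G_minus_M[OF assms(2,3)]) (use assms(4) in \<open>auto simp: WMQ_def\<close>)
  also have "int k - (\<Sum>w\<leftarrow>ws. int k - int (num_neg s w))
      = theta (posroots_M r s) r k ws - theta (posroots_H r s) r k ws"
    by (rule theta_M_minus_theta_H[OF assms(2-4), symmetric])
  finally have "real_of_int (expdim (posroots_G r) r k ws - expdim (posroots_M r s) r k ws)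
      = 2 * (real r - real s) * (real_of_int (theta (posroots_M r s) r k ws) - real_of_int (theta (posroots_H r s) r k ws))"
    by simp
  then show ?thesis using assms(3) by simp
qed

end
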